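(* Let $\mathbb{F}$ be a field of characteristic zero. Fix $K\in\mathbb{N}$ and $\mu\vdash 4K$. There exists an integer $M_K\geq 3K$ such that for every $N\geq M_K$, every standard tableau $T$ of shape $\mu^{(N-3K)}$ and every $O_1,\dots,O_l\in\Omega_{N,N+K}$ the following holds. Put $P_i:=\mathrm{Sub}^T_{(x,y)}(P_{O_i})$. If $f_1,\dots,f_r\in\mathrm{span}_{\mathbb{F}}\{P_1,\dots,P_l\}$ are linearly independent, written as $f_j=\sum_i\alpha_{ji}P_i$, then for all sufficiently large $s$ the map $(\cdot)^{(s)}:\mathrm{span}_{\mathbb{F}}\{f_1,\dots,f_r\}\to\mathbb{F}\langle Y\rangle$, $f_j\mapsto f_j^{(s)}:=\sum_i\alpha_{ji}P_i^{(s)}$ extended linearly, is injective (i.e. $f_1^{(s)},\dots,f_r^{(s)}$ are linearly independent).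
   Context: $\mathbb{F}\langle X\rangle$, $\mathbb{F}\langle Y\rangle$ are free non-unitary associative algebras on $X=\{x_1,x_2,\dots\}$ and $Y=\{y_1,y_2,\dots\}$. A standard tableau $T$ of shape $\nu\vdash m$ is the Young diagram of $\nu$ filled with $1,\dots,m$ increasing along rows and columns; $\mathrm{Sub}^T_{(x,y)}:\mathbb{F}\langle x_1,\dots,x_m\rangle\to\mathbb{F}\langle Y\rangle$ is the homomorphism $x_j\mapsto y_{i_j}$, where $i_j$ is the row of $T$ containing $j$. For $\nu=(\nu_1,\dots,\nu_r)$, $\nu^{(s)}=(\nu_1+s,\nu_2,\dots,\nu_r)$. $\Omega_{n,m}$ is the set of ordered partitions $O=\{A_1,\dots,A_n\}$ of $[m]$ into $n$ nonempty ordered lists (underlying sets disjoint with union $[m]$); for $A=[\![ab\cdots c]\!]$, $x_A=x_ax_b\cdots x_c$; $P_n(z_1,\dots,z_n):=\sum_{\sigma\in S_n}z_{\sigma(1)}\cdots z_{\sigma(n)}$ and $P_O:=P_n(x_{A_1},\dots,x_{A_n})$. Thus $\mathrm{Sub}^T_{(x,y)}(P_O)=P_n(m_1,\dots,m_n)$ with monomials $m_k=\mathrm{Sub}^T_{(x,y)}(x_{A_k})$, and for this $P=P_n(m_1,\dots,m_n)$ one sets $P^{(s)}:=P_{n+s}(m_1,\dots,m_n,y_1,\dots,y_1)$ ($s$ copies of $y_1$). *)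

theory Defs
  imports "HOL-Combinatorics.Permutations"
begin

text \<open>Elements of the free non-unitary algebra F<Y> are represented by their
coefficient functions on words; a word is a list of variable indices
(letter i stands for y_i, indices 1-based).\<close>

definition is_partition :: "nat list \<Rightarrow> nat \<Rightarrow> bool" where
  "is_partition \<nu> m \<longleftrightarrow> sorted_wrt (\<ge>) \<nu> \<and> (\<forall>x\<in>set \<nu>. 0 < x) \<and> sum_list \<nu> = m"

definition shape_shift :: "nat \<Rightarrow> nat list \<Rightarrow> nat list" where
  "shape_shift s \<nu> = (case \<nu> of [] \<Rightarrow> [s] | a # r \<Rightarrow> (a + s) # r)"

text \<open>A tableau is the list of its rows (row i+1 is T!i).\<close>
definition standard_tableau :: "nat list list \<Rightarrow> nat list \<Rightarrow> bool" where
  "standard_tableau T \<nu> \<longleftrightarrow>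
     map length T = \<nu> \<and> distinct (concat T) \<and> set (concat T) = {1..sum_list \<nu>} \<and>
     (\<forall>row\<in>set T. sorted_wrt (<) row) \<and>
     (\<forall>i j. Suc i < length T \<and> j < length (T ! Suc i) \<longrightarrow>
            j < length (T ! i) \<and> T ! i ! j < T ! Suc i ! j)"

definition tab_row :: "nat list list \<Rightarrow> nat \<Rightarrow> nat" where
  "tab_row T j = Suc (LEAST i. i < length T \<and> j \<in> set (T ! i))"

text \<open>Sub^T applied to the monomial x_A.\<close>
definition subw :: "nat list list \<Rightarrow> nat list \<Rightarrow> nat list" where
  "subw T A = map (tab_row T) A"

definition ordered_partitions :: "nat \<Rightarrow> nat \<Rightarrow> nat list list set" where
  "ordered_partitions n m = {Q. length Q = n \<and> (\<forall>A\<in>set Q. A \<noteq> []) \<and>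
       distinct (concat Q) \<and> set (concat Q) = {1..m}}"

definition Pn :: "nat list list \<Rightarrow> nat list \<Rightarrow> 'a::comm_ring_1" where
  "Pn ms w = (\<Sum>\<sigma> | \<sigma> permutes {..<length ms}.
      if concat (map (\<lambda>k. ms ! \<sigma> k) [0..<length ms]) = w then 1 else 0)"

definition lin_indep :: "nat \<Rightarrow> (nat \<Rightarrow> nat list \<Rightarrow> 'a::field) \<Rightarrow> bool" where
  "lin_indep r f \<longleftrightarrow>
     (\<forall>c. (\<lambda>w. \<Sum>j<r. c j * f j w) = (\<lambda>w. 0) \<longrightarrow> (\<forall>j<r. c j = 0))"

end

theory Submission
  imports Defs "HOL-Computational_Algebra.Polynomial"
begin

text \<open>Write \<open>P\<^bsup>(s)\<^esup> = P\<^bsub>N+s\<^esub>(m\<^sub>1, \<dots>, m\<^sub>N, c, \<dots>, c)\<close> and let \<open>\<delta>\<^sub>s\<close> be the linear map on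
  F<Y> sending a word to the sum of all words obtained from it by deleting \<open>s\<close> of its letters \<open>c\<close>.
  Splitting the deleted letters into those of the appended monomials and those inside the \<open>m\<^sub>k\<close>
  shows that \<open>\<delta>\<^sub>s(P\<^bsup>(s)\<^esup>) / (N + s)!\<close> is a combination of finitely many fixed elements with
  coefficients \<open>(s choose e) / (N + e)!\<close>: its coefficients are polynomials in \<open>s\<close>, and at \<open>s = 0\<close>
  it is \<open>P / N!\<close>. A finite family with polynomial coefficients that is linearly independent at one
  value of \<open>s\<close> stays independent for all large \<open>s\<close>: eliminating one member at a pivot coordinate
  shrinks the family, and the pivot is a nonzero polynomial with finitely many roots. Finally, the
  \<open>f\<^sub>j\<^bsup>(s)\<^esup>\<close> are independent as soon as their images under \<open>\<delta>\<^sub>s\<close> are.\<close>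

section \<open>Polynomial families and eventual linear independence\<close>

definition polynomial_family :: "(nat \<Rightarrow> 'b \<Rightarrow> 'a::comm_ring_1) \<Rightarrow> bool" where
  "polynomial_family g \<longleftrightarrow> (\<forall>w. \<exists>p. \<forall>s. g s w = poly p (of_nat s))"

lemma polynomial_family_const: "polynomial_family (\<lambda>s w. h w)"
  unfolding polynomial_family_def by (metis poly_0 poly_pCons mult_zero_right add_0_right)

lemma polynomial_family_add:
  "polynomial_family g \<Longrightarrow> polynomial_family h \<Longrightarrow> polynomial_family (\<lambda>s w. g s w + h s w)"
  unfolding polynomial_family_def by (metis poly_add)

lemma polynomial_family_diff:
  "polynomial_family g \<Longrightarrow> polynomial_family h \<Longrightarrow> polynomial_family (\<lambda>s w. g s w - h s w)"
  unfolding polynomial_family_def by (metis poly_diff)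

lemma polynomial_family_mult:
  "polynomial_family g \<Longrightarrow> polynomial_family h \<Longrightarrow> polynomial_family (\<lambda>s w. g s w * h s w)"
  unfolding polynomial_family_def by (metis poly_mult)

lemma polynomial_family_sum:
  "(\<And>i. i \<in> A \<Longrightarrow> polynomial_family (g i)) \<Longrightarrow> polynomial_family (\<lambda>s w. \<Sum>i\<in>A. g i s w)"
  by (induction A rule: infinite_finite_induct) (simp_all add: polynomial_family_const polynomial_family_add)

lemma polynomial_family_at:
  "polynomial_family g \<Longrightarrow> polynomial_family (\<lambda>s w. g s w0)"
  unfolding polynomial_family_def by blast

lemma polynomial_family_binomial:
  "polynomial_family (\<lambda>s w. (of_nat (s choose k) :: 'a::field_char_0))"
proof -
  let ?p = "smult (1 / fact k) (\<Prod>i=0..<k. [:- of_nat i, 1:]) :: 'a poly"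
  have "of_nat (s choose k) = poly ?p (of_nat s)" for s
    by (simp add: binomial_gbinomial gbinomial_prod_rev poly_prod field_simps)
  then show ?thesis unfolding polynomial_family_def by blast
qed

lemma eventually_poly_of_nat_nonzero:
  fixes p :: "'a::{idom,ring_char_0} poly"
  assumes "p \<noteq> 0"
  shows "\<forall>\<^sub>F s in sequentially. poly p (of_nat s) \<noteq> 0"
proof -
  have "finite {s::nat. poly p (of_nat s) = 0}"
    using finite_vimageI[OF poly_roots_finite[OF assms], of of_nat] inj_of_nat
    by (simp add: vimage_def)
  then show ?thesis unfolding cofinite_eq_sequentially[symmetric] eventually_cofinite by simp
qed

lemma lin_indep_nonzero:
  assumes "lin_indep r f" "j < r"
  shows "f j \<noteq> (\<lambda>w. 0)"
proof
  assume "f j = (\<lambda>w. 0)"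
  moreover have "(\<Sum>i<r. of_bool (i = j) * f i w) = f j w" for w
    using assms(2) by (subst sum.remove[of _ j]) auto
  ultimately have "(\<lambda>w. \<Sum>i<r. of_bool (i = j) * f i w) = (\<lambda>w. 0)"
    by simp
  then show False
    using assms unfolding lin_indep_def by fastforce
qed

lemma lin_indep_of_linear_image:
  assumes "lin_indep r g"
    and "\<And>c w. L (\<lambda>v. \<Sum>j<r. c j * f j v) w = (\<Sum>j<r. c j * g j w)"
    and "\<And>w. L (\<lambda>v. 0) w = 0"
  shows "lin_indep r f"
  unfolding lin_indep_def
proof (intro allI impI)
  fix c j assume "(\<lambda>w. \<Sum>j<r. c j * f j w) = (\<lambda>w. 0)" and "j < r"
  then have "(\<lambda>w. \<Sum>j<r. c j * g j w) = (\<lambda>w. 0)"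
    using assms(2,3) by metis
  with \<open>j < r\<close> show "c j = 0"
    using assms(1) unfolding lin_indep_def by blast
qed

text \<open>Gaussian elimination of the last member of the family, pivoting at a word \<open>w0\<close>.\<close>

lemma lin_indep_Suc_iff_eliminate:
  fixes f :: "nat \<Rightarrow> nat list \<Rightarrow> 'a::field"
  assumes pivot: "f r w0 \<noteq> 0"
  shows "lin_indep (Suc r) f \<longleftrightarrow> lin_indep r (\<lambda>j w. f r w0 * f j w - f j w0 * f r w)"
proof -
  have combination: "(\<Sum>j<r. c j * (f r w0 * f j w - f j w0 * f r w))
      = f r w0 * (\<Sum>j<r. c j * f j w) - (\<Sum>j<r. c j * f j w0) * f r w" for c w
    by (simp add: sum_distrib_left sum_distrib_right sum_subtractf algebra_simps)
  show ?thesis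
  proof
    assume indep: "lin_indep (Suc r) f"
    show "lin_indep r (\<lambda>j w. f r w0 * f j w - f j w0 * f r w)"
      unfolding lin_indep_def
    proof (intro allI impI)
      fix c j
      assume c: "(\<lambda>w. \<Sum>j<r. c j * (f r w0 * f j w - f j w0 * f r w)) = (\<lambda>w. 0)"
        and j: "j < r"
      define d where "d j = (if j < r then f r w0 * c j else - (\<Sum>i<r. c i * f i w0))" for j
      have "(\<Sum>j<Suc r. d j * f j w) = (\<Sum>j<r. c j * (f r w0 * f j w - f j w0 * f r w))" for w
        by (simp add: d_def sum_distrib_left sum_distrib_right sum_subtractf algebra_simps)
      then have "(\<lambda>w. \<Sum>j<Suc r. d j * f j w) = (\<lambda>w. 0)"
        using c by (simp add: fun_eq_iff)
      then have "d j = 0"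
        using indep j unfolding lin_indep_def by simp
      then show "c j = 0" using pivot j by (simp add: d_def)
    qed
  next
    assume indep: "lin_indep r (\<lambda>j w. f r w0 * f j w - f j w0 * f r w)"
    show "lin_indep (Suc r) f"
      unfolding lin_indep_def
    proof (intro allI impI)
      fix c j assume "(\<lambda>w. \<Sum>j<Suc r. c j * f j w) = (\<lambda>w. 0)" and j: "j < Suc r"
      then have rest: "(\<Sum>j<r. c j * f j w) = - c r * f r w" for w
        by (simp add: fun_eq_iff add_eq_0_iff)
      then have "(\<lambda>w. \<Sum>j<r. c j * (f r w0 * f j w - f j w0 * f r w)) = (\<lambda>w. 0)"
        by (simp add: combination)
      then have "\<forall>j<r. c j = 0" using indep unfolding lin_indep_def by blast
      moreover from this have "c r = 0" using rest[of w0] pivot by simp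
      ultimately show "c j = 0" using j less_Suc_eq by auto
    qed
  qed
qed

lemma lin_indep_eventually_of_polynomial_family:
  fixes G :: "nat \<Rightarrow> nat \<Rightarrow> nat list \<Rightarrow> 'a::field_char_0"
  assumes "\<And>j. j < r \<Longrightarrow> polynomial_family (G j)" and "lin_indep r (\<lambda>j. G j t)"
  shows "\<forall>\<^sub>F s in sequentially. lin_indep r (\<lambda>j. G j s)"
  using assms
proof (induction r arbitrary: G)
  case 0
  then show ?case by (simp add: lin_indep_def)
next
  case (Suc r)
  obtain w0 where pivot: "G r t w0 \<noteq> 0"
    using lin_indep_nonzero[OF Suc.prems(2), of r] by (auto simp: fun_eq_iff)
  obtain p where p: "\<And>s. G r s w0 = poly p (of_nat s)"
    using Suc.prems(1)[of r] unfolding polynomial_family_def by blast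
  define H where "H = (\<lambda>j s w. G r s w0 * G j s w - G j s w0 * G r s w)"
  have "polynomial_family (H j)" if "j < r" for j
    unfolding H_def using Suc.prems(1) that
    by (intro polynomial_family_diff polynomial_family_mult polynomial_family_at) auto
  moreover have "lin_indep r (\<lambda>j. H j t)"
    using Suc.prems(2) lin_indep_Suc_iff_eliminate[of "\<lambda>j. G j t" r w0] pivot by (simp add: H_def)
  ultimately have "\<forall>\<^sub>F s in sequentially. lin_indep r (\<lambda>j. H j s)"
    by (rule Suc.IH)
  moreover have "\<forall>\<^sub>F s in sequentially. G r s w0 \<noteq> 0"
    unfolding p by (rule eventually_poly_of_nat_nonzero) (use pivot p in auto)
  ultimately show ?case
  proof eventually_elim
    case (elim s)
    then show ?case using lin_indep_Suc_iff_eliminate[of "\<lambda>j. G j s" r w0] by (simp add: H_def)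
  qed
qed

section \<open>Empty monomials in \<open>P\<^sub>n\<close>\<close>

text \<open>Counting with an arbitrary predicate instead of equality with a fixed word is what makes
  the recursion of \<open>Pn_pred_remove1\<close> expressible.\<close>

definition Pn_pred :: "'b list list \<Rightarrow> ('b list \<Rightarrow> bool) \<Rightarrow> 'a::comm_ring_1" where
  "Pn_pred ms P = (\<Sum>\<sigma> | \<sigma> permutes {..<length ms}. of_bool (P (concat (permute_list \<sigma> ms))))"

lemma Pn_eq_Pn_pred: "Pn ms w = Pn_pred ms (\<lambda>v. v = w)"
  unfolding Pn_def Pn_pred_def permute_list_def of_bool_def ..

lemma Pn_pred_mset_cong:
  assumes "mset ms = mset ms'"
  shows "(Pn_pred ms P :: 'a::comm_ring_1) = Pn_pred ms' P"
proof -
  obtain \<pi> where \<pi>: "\<pi> permutes {..<length ms'}" "permute_list \<pi> ms' = ms"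
    using mset_eq_permutation[OF assms] by blast
  have len: "length ms = length ms'" using assms by (rule mset_eq_length)
  let ?f = "\<lambda>\<sigma>. of_bool (P (concat (permute_list \<sigma> ms'))) :: 'a"
  have "Pn_pred ms P = (\<Sum>\<sigma> | \<sigma> permutes {..<length ms'}. ?f (\<pi> \<circ> \<sigma>))"
    unfolding Pn_pred_def len
    by (intro sum.cong refl) (simp add: permute_list_compose \<pi>(2)[symmetric])
  also have "\<dots> = (\<Sum>\<sigma> | \<sigma> permutes {..<length ms'}. ?f \<sigma>)"
    using setum_permutations_compose_left[OF \<pi>(1), of ?f] by simp
  finally show ?thesis unfolding Pn_pred_def .
qed

lemma permute_list_transpose_comp:
  assumes "length Y = Suc m" "b < Suc m" "q permutes {..<m}"
  shows "permute_list (transpose m b \<circ> q) Y =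
         permute_list q (take m (permute_list (transpose m b) Y)) @ [Y ! b]"
proof -
  let ?X = "permute_list (transpose m b) Y"
  have "transpose m b permutes {..<length Y}"
    using assms by (intro permutes_swap_id) auto
  then have last: "?X ! m = Y ! b"
    using assms(1) by (simp add: permute_list_nth transpose_def)
  have "q i < m" if "i < m" for i
    using permutes_in_image[OF assms(3)] that by simp
  then have init: "map (\<lambda>i. ?X ! q i) [0..<m] = permute_list q (take m ?X)"
    unfolding permute_list_def[of q "take m ?X"] using assms(1) by simp
  have "permute_list (transpose m b \<circ> q) Y = permute_list q ?X"
    using assms by (intro permute_list_compose permutes_subset[OF assms(3)]) auto
  also have "\<dots> = map (\<lambda>i. ?X ! q i) [0..<m] @ [?X ! q m]"
    using assms(1) by (simp add: permute_list_def)
  also have "\<dots> = permute_list q (take m ?X) @ [Y ! b]"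
    using permutes_not_in[OF assms(3), of m] by (simp add: init last)
  finally show ?thesis .
qed

lemma Pn_pred_split_last:
  assumes "length Y = Suc m"
  shows "(Pn_pred Y P :: 'a::comm_ring_1) =
    (\<Sum>b<Suc m. Pn_pred (take m (permute_list (transpose m b) Y)) (\<lambda>v. P (v @ Y ! b)))"
proof -
  have len: "length (take m (permute_list (transpose m b) Y)) = m" for b
    using assms by simp
  have "(Pn_pred Y P :: 'a) =
      (\<Sum>\<sigma> | \<sigma> permutes insert m {..<m}. of_bool (P (concat (permute_list \<sigma> Y))))"
    unfolding Pn_pred_def assms lessThan_Suc by simp
  also have "\<dots> = (\<Sum>b\<in>insert m {..<m}. \<Sum>q | q permutes {..<m}.
      of_bool (P (concat (permute_list (transpose m b \<circ> q) Y))))"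
    by (rule sum_over_permutations_insert) auto
  also have "\<dots> = (\<Sum>b<Suc m. Pn_pred (take m (permute_list (transpose m b) Y)) (\<lambda>v. P (v @ Y ! b)))"
    unfolding lessThan_Suc[symmetric] Pn_pred_def len
  proof (intro sum.cong refl)
    fix b q assume "b \<in> {..<Suc m}" "q \<in> {\<sigma>. \<sigma> permutes {..<m}}"
    then show "of_bool (P (concat (permute_list (transpose m b \<circ> q) Y))) =
        (of_bool (P (concat (permute_list q (take m (permute_list (transpose m b) Y))) @ Y ! b)) :: 'a)"
      using permute_list_transpose_comp[OF assms, of b q] by simp
  qed
  finally show ?thesis .
qed

lemma mset_take_permute_list_transpose:
  assumes "length Y = Suc m" "b < Suc m"
  shows "mset (take m (permute_list (transpose m b) Y)) = mset (remove1 (Y ! b) Y)"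
proof -
  let ?X = "permute_list (transpose m b) Y"
  have tp: "transpose m b permutes {..<length Y}"
    using assms by (intro permutes_swap_id) auto
  have "?X = take m ?X @ [?X ! m]"
    using assms by (metis Suc_le_eq le_refl length_permute_list take_Suc_conv_app_nth take_all)
  moreover have "?X ! m = Y ! b" using assms by (simp add: permute_list_nth[OF tp])
  moreover have "mset ?X = mset Y" using tp by simp
  ultimately have "mset Y = mset (take m ?X) + {#Y ! b#}"
    by (metis mset.simps(1) mset.simps(2) mset_append add_mset_add_single)
  then show ?thesis by simp
qed

lemma Pn_pred_remove1:
  assumes "Y \<noteq> []"
  shows "(Pn_pred Y P :: 'a::comm_ring_1) = (\<Sum>b<length Y. Pn_pred (remove1 (Y ! b) Y) (\<lambda>v. P (v @ Y ! b)))"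
proof -
  obtain m where m: "length Y = Suc m" using assms by (cases Y) auto
  show ?thesis
    unfolding Pn_pred_split_last[OF m] m
    by (intro sum.cong refl Pn_pred_mset_cong mset_take_permute_list_transpose[OF m]) simp
qed

lemma Pn_pred_snoc_Nil:
  "Pn_pred (Y @ [[]]) P = (of_nat (Suc (length Y)) :: 'a::comm_ring_1) * Pn_pred Y P"
proof (induction "length Y" arbitrary: Y P)
  case 0
  then show ?case using Pn_pred_remove1[of "[[]]" P] by simp
next
  case (Suc m)
  let ?Y' = "Y @ [[]]"
  have remove1_snoc: "b < length Y \<Longrightarrow> remove1 (Y ! b) ?Y' = remove1 (Y ! b) Y @ [[]]" for b
    by (simp add: remove1_append)
  have last: "(Pn_pred (remove1 [] ?Y') P :: 'a) = Pn_pred Y P"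
    by (rule Pn_pred_mset_cong) simp
  have IH: "Pn_pred (remove1 (Y ! b) Y @ [[]]) Q = (of_nat (length Y) :: 'a) * Pn_pred (remove1 (Y ! b) Y) Q"
    if "b < length Y" for b Q
  proof -
    have len: "Suc (length (remove1 (Y ! b) Y)) = length Y"
      using that by (simp add: length_remove1)
    then have "m = length (remove1 (Y ! b) Y)"
      using Suc.hyps(2) by simp
    from Suc.hyps(1)[OF this, of Q] show ?thesis
      by (simp only: len)
  qed
  have "(Pn_pred ?Y' P :: 'a) = (\<Sum>b<Suc (length Y). Pn_pred (remove1 (?Y' ! b) ?Y') (\<lambda>v. P (v @ ?Y' ! b)))"
    using Pn_pred_remove1[of ?Y' P] by simp
  also have "\<dots> = (\<Sum>b<length Y. Pn_pred (remove1 (Y ! b) Y @ [[]]) (\<lambda>v. P (v @ Y ! b))) + Pn_pred Y P"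
    using last by (simp add: remove1_snoc nth_append)
  also have "\<dots> = of_nat (length Y) * (\<Sum>b<length Y. Pn_pred (remove1 (Y ! b) Y) (\<lambda>v. P (v @ Y ! b)))
      + Pn_pred Y P"
    by (simp add: IH sum_distrib_left)
  also have "\<dots> = of_nat (Suc (length Y)) * Pn_pred Y P"
  proof -
    have "Y \<noteq> []" using Suc.hyps(2) by auto
    then show ?thesis using Pn_pred_remove1[of Y P, where 'a = 'a] by (simp add: algebra_simps)
  qed
  finally show ?case .
qed

lemma Pn_append_Nils:
  "Pn (Y @ replicate e []) w * (of_nat (fact (length Y)) :: 'a::comm_ring_1)
     = of_nat (fact (length Y + e)) * Pn Y w"
proof (induction e)
  case 0
  then show ?case by simp
next
  case (Suc e)
  have "Pn (Y @ replicate (Suc e) []) w = (of_nat (Suc (length Y + e)) :: 'a) * Pn (Y @ replicate e []) w"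
    unfolding Pn_eq_Pn_pred
    by (simp add: replicate_append_same[symmetric] Pn_pred_snoc_Nil[of "Y @ replicate e []", simplified])
  then have "Pn (Y @ replicate (Suc e) []) w * of_nat (fact (length Y))
      = (of_nat (Suc (length Y + e)) :: 'a) * (Pn (Y @ replicate e []) w * of_nat (fact (length Y)))"
    by (simp only: mult.assoc)
  also have "\<dots> = of_nat (Suc (length Y + e)) * (of_nat (fact (length Y + e)) * Pn Y w)"
    by (simp only: Suc.IH)
  also have "\<dots> = of_nat (fact (length Y + Suc e)) * Pn Y w"
    by (simp only: add_Suc_right fact_Suc of_nat_mult of_nat_id mult.assoc)
  finally show ?case .
qed

section \<open>Deleting occurrences of a letter\<close>

text \<open>If \<open>g\<close> is the coefficient function of an element of F<Y>, then \<open>delete_letter c s g\<close> is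
  the coefficient function of its image under \<open>\<delta>\<^sub>s\<close>, the map deleting \<open>s\<close> letters \<open>c\<close>.\<close>

definition insertions :: "'b \<Rightarrow> nat \<Rightarrow> 'b list \<Rightarrow> ('b list \<times> nat set) set" where
  "insertions c s w = {(v, D). D \<subseteq> {i. i < length v \<and> v ! i = c} \<and> card D = s \<and> nths v (- D) = w}"

definition delete_letter :: "'b \<Rightarrow> nat \<Rightarrow> ('b list \<Rightarrow> 'a) \<Rightarrow> 'b list \<Rightarrow> 'a::comm_ring_1" where
  "delete_letter c s g w = (\<Sum>(v, D)\<in>insertions c s w. g v)"

lemma insertions_length_set:
  assumes "(v, D) \<in> insertions c s w"
  shows "length v = length w + s" "set v \<subseteq> insert c (set w)"
proof -
  have D: "D \<subseteq> {i. i < length v \<and> v ! i = c}" "card D = s" "nths v (- D) = w"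
    using assms by (auto simp: insertions_def)
  then have D_range: "D \<subseteq> {..<length v}" by auto
  have "length w = card {i. i < length v \<and> i \<in> - D}"
    using D(3) by (metis length_nths)
  also have "{i. i < length v \<and> i \<in> - D} = {..<length v} - D"
    by auto
  also have "card ({..<length v} - D) = length v - s"
    using D_range D(2) by (simp add: card_Diff_subset finite_subset)
  finally show "length v = length w + s"
    using D(2) card_mono[OF _ D_range] by simp
  show "set v \<subseteq> insert c (set w)"
  proof
    fix x assume "x \<in> set v"
    then obtain i where i: "i < length v" "x = v ! i" by (auto simp: in_set_conv_nth)
    show "x \<in> insert c (set w)"
    proof (cases "i \<in> D")
      case True
      then show ?thesis using D(1) i by auto
    next
      case False
      then have "x \<in> set (nths v (- D))" using i by (auto simp: set_nths)
      then show ?thesis using D(3) by simp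
    qed
  qed
qed

lemma finite_insertions: "finite (insertions c s w)"
proof (rule finite_subset)
  have "(v, D) \<in> {v. set v \<subseteq> insert c (set w) \<and> length v = length w + s} \<times> Pow {..<length w + s}"
    if vD: "(v, D) \<in> insertions c s w" for v D
  proof -
    have "D \<subseteq> {..<length v}" using vD by (auto simp: insertions_def)
    then show ?thesis using insertions_length_set[OF vD] by simp
  qed
  then show "insertions c s w \<subseteq>
      {v. set v \<subseteq> insert c (set w) \<and> length v = length w + s} \<times> Pow {..<length w + s}"
    by (intro subrelI)
  show "finite ({v. set v \<subseteq> insert c (set w) \<and> length v = length w + s} \<times> Pow {..<length w + s})"
    by (intro finite_cartesian_product finite_lists_length_eq) auto
qed

lemma insertions_0: "insertions c 0 w = {(w, {})}"
proof -
  have "(v, D) \<in> insertions c 0 w \<longleftrightarrow> v = w \<and> D = {}" for v D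
  proof -
    have "D = {}" if "D \<subseteq> {i. i < length v \<and> v ! i = c}" "card D = 0"
    proof -
      have "finite D" using that(1) by (rule finite_subset) auto
      then show ?thesis using that(2) by simp
    qed
    then show ?thesis by (auto simp: insertions_def nths_all)
  qed
  then show ?thesis by auto
qed

lemma delete_letter_0: "delete_letter c 0 g w = g w"
  by (simp add: delete_letter_def insertions_0)

lemma delete_letter_sum:
  "delete_letter c s (\<lambda>v. \<Sum>j\<in>J. a j * g j v) w = (\<Sum>j\<in>J. a j * delete_letter c s (g j) w)"
  unfolding delete_letter_def case_prod_unfold
  by (simp add: sum_distrib_left sum.swap[of _ J])

lemma delete_letter_indicator:
  "delete_letter c s (\<lambda>v. of_bool (u = v)) w = of_nat (card {D. (u, D) \<in> insertions c s w})"
proof -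
  have "delete_letter c s (\<lambda>v. of_bool (u = v)) w
      = of_nat (card (insertions c s w \<inter> {x. u = fst x}))"
    unfolding delete_letter_def case_prod_unfold by (simp add: finite_insertions)
  also have "card (insertions c s w \<inter> {x. u = fst x}) = card {D. (u, D) \<in> insertions c s w}"
    by (rule bij_betw_same_card[of snd]) (rule bij_betw_byWitness[where f' = "\<lambda>D. (u, D)"], auto)
  finally show ?thesis .
qed

definition letter_positions :: "'b list list \<Rightarrow> nat list \<Rightarrow> (nat \<times> nat) list" where
  "letter_positions C ks = concat (map (\<lambda>k. map (\<lambda>j. (k, j)) [0..<length (C ! k)]) ks)"

definition letter_at :: "'b list list \<Rightarrow> nat \<times> nat \<Rightarrow> 'b" where
  "letter_at C t = C ! fst t ! snd t"

definition delete_positions :: "(nat \<times> nat) set \<Rightarrow> 'b list list \<Rightarrow> 'b list list" where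
  "delete_positions E C =
     map (\<lambda>k. map (\<lambda>j. C ! k ! j) (filter (\<lambda>j. (k, j) \<notin> E) [0..<length (C ! k)])) [0..<length C]"

definition occurrences :: "'b \<Rightarrow> 'b list list \<Rightarrow> (nat \<times> nat) set" where
  "occurrences c C = {(k, j). k < length C \<and> j < length (C ! k) \<and> C ! k ! j = c}"

lemma distinct_letter_positions: "distinct ks \<Longrightarrow> distinct (letter_positions C ks)"
  by (induction ks) (auto simp: letter_positions_def distinct_map inj_on_def)

lemma set_letter_positions:
  "set (letter_positions C ks) = {(k, j). k \<in> set ks \<and> j < length (C ! k)}"
  by (auto simp: letter_positions_def)

lemma concat_eq_map_letter_at:
  "concat (map (\<lambda>k. C ! k) ks) = map (letter_at C) (letter_positions C ks)"
  by (induction ks) (auto simp: letter_positions_def letter_at_def o_def map_nth)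

lemma concat_delete_positions:
  "set ks \<subseteq> {..<length C} \<Longrightarrow>
   concat (map (\<lambda>k. delete_positions E C ! k) ks)
     = map (letter_at C) (filter (\<lambda>t. t \<notin> E) (letter_positions C ks))"
  by (induction ks) (auto simp: letter_positions_def letter_at_def delete_positions_def filter_map o_def)

lemma finite_occurrences: "finite (occurrences c C)"
proof (rule finite_subset)
  show "occurrences c C \<subseteq> (SIGMA k:{..<length C}. {..<length (C ! k)})"
    by (auto simp: occurrences_def)
qed auto

lemma length_delete_positions [simp]: "length (delete_positions E C) = length C"
  by (simp add: delete_positions_def)

lemma nths_compl_eq_filter:
  assumes "distinct tv" "D \<subseteq> {..<length tv}"
  shows "nths tv (- D) = filter (\<lambda>t. t \<notin> (\<lambda>i. tv ! i) ` D) tv"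
proof -
  have "set (nths tv (- D)) = set tv - (\<lambda>i. tv ! i) ` D"
    using assms by (auto simp: set_nths in_set_conv_nth nth_eq_iff_index_eq; blast)
  then have "nths tv (- D) = filter (\<lambda>x. x \<in> set tv - (\<lambda>i. tv ! i) ` D) tv"
    using filter_in_nths[OF assms(1), of "- D"] by simp
  also have "\<dots> = filter (\<lambda>t. t \<notin> (\<lambda>i. tv ! i) ` D) tv"
    by (rule filter_cong) auto
  finally show ?thesis .
qed

text \<open>In a list without repetitions, deleting a set of indices is the same as deleting the set
  of entries at those indices.\<close>

lemma card_index_deletions_eq:
  assumes dist: "distinct tv"
  shows "card {D. D \<subseteq> {i. i < length tv \<and> lt (tv ! i) = c} \<and> card D = s \<and> map lt (nths tv (- D)) = w}
       = card {E. E \<subseteq> {t\<in>set tv. lt t = c} \<and> card E = s \<and> map lt (filter (\<lambda>t. t \<notin> E) tv) = w}"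
    (is "card ?Ds = card ?Es")
proof (rule bij_betw_same_card)
  let ?f = "\<lambda>D. (\<lambda>i. tv ! i) ` D"
  let ?g = "\<lambda>E. {i. i < length tv \<and> tv ! i \<in> E}"
  have inj: "inj_on (\<lambda>i. tv ! i) D" if "D \<subseteq> {..<length tv}" for D
    using inj_on_nth[OF dist, of D] that by auto
  show "bij_betw ?f ?Ds ?Es"
  proof (rule bij_betw_byWitness[where f' = ?g])
    show "\<forall>D\<in>?Ds. ?g (?f D) = D"
      using dist by (auto simp: nth_eq_iff_index_eq)
    show "\<forall>E\<in>?Es. ?f (?g E) = E"
      by (auto simp: in_set_conv_nth image_iff)
    show "?f ` ?Ds \<subseteq> ?Es"
    proof (rule image_subsetI, unfold mem_Collect_eq, elim conjE, intro conjI)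
      fix D assume D: "D \<subseteq> {i. i < length tv \<and> lt (tv ! i) = c}" and "card D = s"
        and deleted: "map lt (nths tv (- D)) = w"
      have D_range: "D \<subseteq> {..<length tv}" using D by auto
      show "?f D \<subseteq> {t\<in>set tv. lt t = c}" using D by auto
      show "card (?f D) = s" using card_image[OF inj[OF D_range]] \<open>card D = s\<close> by simp
      show "map lt (filter (\<lambda>t. t \<notin> ?f D) tv) = w"
        using deleted nths_compl_eq_filter[OF dist D_range] by simp
    qed
    show "?g ` ?Es \<subseteq> ?Ds"
    proof (rule image_subsetI, unfold mem_Collect_eq, elim conjE, intro conjI)
      fix E assume E: "E \<subseteq> {t\<in>set tv. lt t = c}" and "card E = s"
        and deleted: "map lt (filter (\<lambda>t. t \<notin> E) tv) = w"
      have g_range: "?g E \<subseteq> {..<length tv}" by auto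
      have fg: "?f (?g E) = E" using E by (auto simp: in_set_conv_nth image_iff)
      show "?g E \<subseteq> {i. i < length tv \<and> lt (tv ! i) = c}" using E by auto
      show "card (?g E) = s" using card_image[OF inj[OF g_range]] fg \<open>card E = s\<close> by simp
      show "map lt (nths tv (- ?g E)) = w"
        using deleted nths_compl_eq_filter[OF dist g_range] fg by simp
    qed
  qed
qed

lemma delete_letter_Pn:
  "(delete_letter c s (Pn C) w :: 'a::comm_ring_1)
     = (\<Sum>E | E \<subseteq> occurrences c C \<and> card E = s. Pn (delete_positions E C) w)"
proof -
  let ?Perm = "{\<sigma>. \<sigma> permutes {..<length C}}"
  let ?word = "\<lambda>\<sigma>. concat (map (\<lambda>k. C ! \<sigma> k) [0..<length C])"
  let ?word_del = "\<lambda>E \<sigma>. concat (map (\<lambda>k. delete_positions E C ! \<sigma> k) [0..<length C])"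
  let ?Es = "{E. E \<subseteq> occurrences c C \<and> card E = s}"
  have Pn_sum: "(Pn C :: nat list \<Rightarrow> 'a) = (\<lambda>v. \<Sum>\<sigma>\<in>?Perm. 1 * of_bool (?word \<sigma> = v))"
    by (rule ext) (simp only: Pn_def of_bool_def mult_1)
  have "delete_letter c s (Pn C) w
      = (\<Sum>\<sigma>\<in>?Perm. 1 * delete_letter c s (\<lambda>v. of_bool (?word \<sigma> = v)) w :: 'a)"
    unfolding Pn_sum by (rule delete_letter_sum)
  also have "\<dots> = (\<Sum>\<sigma>\<in>?Perm. of_nat (card {D. (?word \<sigma>, D) \<in> insertions c s w}))"
    by (simp only: delete_letter_indicator mult_1)
  also have "\<dots> = (\<Sum>\<sigma>\<in>?Perm. of_nat (card (?Es \<inter> {E. ?word_del E \<sigma> = w})))"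
  proof (intro sum.cong refl arg_cong[where f = of_nat])
    fix \<sigma> assume "\<sigma> \<in> ?Perm"
    then have \<sigma>: "\<sigma> permutes {..<length C}" by simp
    let ?ks = "map \<sigma> [0..<length C]"
    let ?tv = "letter_positions C ?ks"
    have "set ?ks = \<sigma> ` {..<length C}" by (simp add: atLeast0LessThan)
    then have set_ks: "set ?ks = {..<length C}" using permutes_image[OF \<sigma>] by simp
    have "distinct ?ks"
      using permutes_inj_on[OF \<sigma>] by (simp add: distinct_map inj_on_subset)
    then have dist: "distinct ?tv" by (rule distinct_letter_positions)
    have word: "?word \<sigma> = map (letter_at C) ?tv"
      using concat_eq_map_letter_at[of C ?ks] by (simp add: o_def)
    have word_del: "?word_del E \<sigma> = map (letter_at C) (filter (\<lambda>t. t \<notin> E) ?tv)" for E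
      using concat_delete_positions[of ?ks C E] set_ks by (simp add: o_def)
    have occ: "{t\<in>set ?tv. letter_at C t = c} = occurrences c C"
      unfolding set_letter_positions set_ks by (auto simp: occurrences_def letter_at_def)
    have ins: "{D. (?word \<sigma>, D) \<in> insertions c s w} =
        {D. D \<subseteq> {i. i < length ?tv \<and> letter_at C (?tv ! i) = c} \<and> card D = s
            \<and> map (letter_at C) (nths ?tv (- D)) = w}"
    proof -
      have "{i. i < length ?tv \<and> map (letter_at C) ?tv ! i = c}
          = {i. i < length ?tv \<and> letter_at C (?tv ! i) = c}"
        by auto
      then show ?thesis unfolding insertions_def word by (simp add: nths_map)
    qed
    have del: "{E. E \<subseteq> {t\<in>set ?tv. letter_at C t = c} \<and> card E = s
            \<and> map (letter_at C) (filter (\<lambda>t. t \<notin> E) ?tv) = w} = ?Es \<inter> {E. ?word_del E \<sigma> = w}"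
      unfolding occ word_del by auto
    show "card {D. (?word \<sigma>, D) \<in> insertions c s w} = card (?Es \<inter> {E. ?word_del E \<sigma> = w})"
      unfolding ins del[symmetric] by (rule card_index_deletions_eq[OF dist])
  qed
  also have "\<dots> = (\<Sum>\<sigma>\<in>?Perm. \<Sum>E\<in>?Es. of_bool (?word_del E \<sigma> = w))"
  proof -
    have "finite ?Es"
      by (rule finite_subset[of _ "Pow (occurrences c C)"]) (auto simp: finite_occurrences)
    then show ?thesis by (simp only: sum_of_bool_eq)
  qed
  also have "\<dots> = (\<Sum>E\<in>?Es. \<Sum>\<sigma>\<in>?Perm. of_bool (?word_del E \<sigma> = w))"
    by (rule sum.swap)
  also have "\<dots> = (\<Sum>E\<in>?Es. Pn (delete_positions E C) w)"
    by (simp only: Pn_def length_delete_positions of_bool_def)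
  finally show ?thesis .
qed

section \<open>Deleting letters from appended copies\<close>

lemma mset_map_if_Nil:
  "mset (map (\<lambda>k. if P k then [] else [c]) ks) =
     replicate_mset (length (filter P ks)) [] + replicate_mset (length (filter (\<lambda>k. \<not> P k) ks)) [c]"
  by (induction ks) auto

lemma card_subsets_card_diff:
  "card (Pow {N..<N + s} \<inter> {K. card K = s - a \<and> a \<le> s}) = s choose a"
proof (cases "a \<le> s")
  case True
  then have "Pow {N..<N + s} \<inter> {K. card K = s - a \<and> a \<le> s} = {K. K \<subseteq> {N..<N + s} \<and> card K = s - a}"
    by auto
  with True show ?thesis
    by (simp add: n_subsets binomial_symmetric[symmetric])
qed simp

lemma sum_Pow_Un:
  assumes "A \<inter> B = {}"
  shows "(\<Sum>E\<in>Pow (A \<union> B). f E) = (\<Sum>E1\<in>Pow A. \<Sum>E2\<in>Pow B. f (E1 \<union> E2))"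
proof -
  have "bij_betw (\<lambda>(E1, E2). E1 \<union> E2) (Pow A \<times> Pow B) (Pow (A \<union> B))"
    by (rule bij_betw_byWitness[where f' = "\<lambda>E. (E \<inter> A, E \<inter> B)"]) (use assms in auto)
  then show ?thesis
    by (simp add: sum.reindex_bij_betw[symmetric] sum.cartesian_product case_prod_unfold)
qed

lemma fst_occurrence_less: "t \<in> occurrences c B \<Longrightarrow> fst t < length B"
  by (auto simp: occurrences_def)

lemma occurrences_append_letters:
  assumes "length B = N"
  shows "occurrences c (B @ replicate s [c]) = occurrences c B \<union> (\<lambda>k. (k, 0)) ` {N..<N + s}"
proof (rule set_eqI)
  fix t :: "nat \<times> nat"
  obtain k j where t: "t = (k, j)" by (cases t)
  show "t \<in> occurrences c (B @ replicate s [c]) \<longleftrightarrow> t \<in> occurrences c B \<union> (\<lambda>k. (k, 0)) ` {N..<N + s}"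
    using assms by (cases "k < N") (auto simp: t occurrences_def nth_append)
qed

lemma delete_positions_append_letters:
  assumes "length B = N" "E1 \<subseteq> occurrences c B" "K \<subseteq> {N..<N + s}"
  shows "delete_positions (E1 \<union> (\<lambda>k. (k, 0)) ` K) (B @ replicate s [c]) =
         delete_positions E1 B @ map (\<lambda>k. if k \<in> K then [] else [c]) [N..<N + s]"
proof -
  let ?E = "E1 \<union> (\<lambda>k. (k, 0)) ` K"
  let ?C = "B @ replicate s [c]"
  let ?del = "\<lambda>k. map (\<lambda>j. ?C ! k ! j) (filter (\<lambda>j. (k, j) \<notin> ?E) [0..<length (?C ! k)])"
  have "[0..<length ?C] = [0..<N] @ [N..<N + s]"
    using assms(1) upt_add_eq_append[of 0 N s] by simp
  then have "delete_positions ?E ?C = map ?del [0..<N] @ map ?del [N..<N + s]"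
    unfolding delete_positions_def by simp
  also have "map ?del [0..<N] = delete_positions E1 B"
    unfolding delete_positions_def assms(1)[symmetric]
  proof (rule map_cong[OF refl])
    fix k assume "k \<in> set [0..<length B]"
    then have k: "k < length B" by simp
    have "filter (\<lambda>j. (k, j) \<notin> ?E) [0..<length (B ! k)] = filter (\<lambda>j. (k, j) \<notin> E1) [0..<length (B ! k)]"
      using k assms by (intro filter_cong) auto
    then show "?del k = map (\<lambda>j. B ! k ! j) (filter (\<lambda>j. (k, j) \<notin> E1) [0..<length (B ! k)])"
      using k by (simp add: nth_append)
  qed
  also have "map ?del [N..<N + s] = map (\<lambda>k. if k \<in> K then [] else [c]) [N..<N + s]"
  proof (rule map_cong[OF refl])
    fix k assume "k \<in> set [N..<N + s]"
    then have k: "N \<le> k" "k < N + s" by auto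
    have letter: "?C ! k = [c]" using k assms(1) by (simp add: nth_append)
    have "(k, 0) \<in> ?E \<longleftrightarrow> k \<in> K"
      using k assms fst_occurrence_less[of "(k, 0)" c B] by auto
    then show "?del k = (if k \<in> K then [] else [c])"
      unfolding letter by auto
  qed
  finally show ?thesis .
qed

text \<open>Deleting the appended letters indexed by \<open>K\<close> leaves \<open>card K\<close> empty monomials, which
  only contribute a factorial factor.\<close>

lemma Pn_delete_positions_append_letters:
  assumes "length B = N" "E1 \<subseteq> occurrences c B" "K \<subseteq> {N..<N + s}"
  shows "Pn (delete_positions (E1 \<union> (\<lambda>k. (k, 0)) ` K) (B @ replicate s [c])) w
           * (of_nat (fact (N + (s - card K))) :: 'a::comm_ring_1)
       = of_nat (fact (N + s)) * Pn (delete_positions E1 B @ replicate (s - card K) [c]) w"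
proof -
  let ?B' = "delete_positions E1 B @ replicate (s - card K) [c]"
  have card_K: "card K \<le> s" using card_mono[OF _ assms(3)] by simp
  have "{k. k \<in> K} \<inter> set [N..<N + s] = K" "{k. k \<notin> K} \<inter> set [N..<N + s] = {N..<N + s} - K"
    using assms(3) by auto
  moreover have "card ({N..<N + s} - K) = s - card K"
    using assms(3) by (simp add: card_Diff_subset finite_subset)
  ultimately have "length (filter (\<lambda>k. k \<in> K) [N..<N + s]) = card K"
    "length (filter (\<lambda>k. k \<notin> K) [N..<N + s]) = s - card K"
    by (simp_all only: distinct_length_filter distinct_upt)
  then have "mset (delete_positions (E1 \<union> (\<lambda>k. (k, 0)) ` K) (B @ replicate s [c]))
      = mset (?B' @ replicate (card K) [])"
    unfolding delete_positions_append_letters[OF assms] mset_append mset_map_if_Nil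
    by (simp add: ac_simps)
  then have "(Pn (delete_positions (E1 \<union> (\<lambda>k. (k, 0)) ` K) (B @ replicate s [c])) w :: 'a)
      = Pn (?B' @ replicate (card K) []) w"
    unfolding Pn_eq_Pn_pred by (rule Pn_pred_mset_cong)
  moreover have "length ?B' = N + (s - card K)"
    using assms(1) by simp
  ultimately show ?thesis
    using Pn_append_Nils[of ?B' "card K" w, where 'a = 'a] card_K by simp
qed

lemma sum_delete_appended_letters:
  assumes "length B = N" "E1 \<subseteq> occurrences c B"
  shows "(\<Sum>K\<in>Pow {N..<N + s}. if card E1 + card K = s
           then Pn (delete_positions (E1 \<union> (\<lambda>k. (k, 0)) ` K) (B @ replicate s [c])) w else 0)
       = of_nat (s choose card E1) * ((of_nat (fact (N + s)) :: 'a::field_char_0) *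
           Pn (delete_positions E1 B @ replicate (card E1) [c]) w / of_nat (fact (N + card E1)))"
proof -
  let ?V = "(of_nat (fact (N + s)) :: 'a) * Pn (delete_positions E1 B @ replicate (card E1) [c]) w
      / of_nat (fact (N + card E1))"
  have "(\<Sum>K\<in>Pow {N..<N + s}. if card E1 + card K = s
           then Pn (delete_positions (E1 \<union> (\<lambda>k. (k, 0)) ` K) (B @ replicate s [c])) w else 0)
      = (\<Sum>K\<in>Pow {N..<N + s}. of_bool (card K = s - card E1 \<and> card E1 \<le> s) * ?V)"
  proof (rule sum.cong[OF refl])
    fix K assume "K \<in> Pow {N..<N + s}"
    then have K: "K \<subseteq> {N..<N + s}" by simp
    show "(if card E1 + card K = s
           then Pn (delete_positions (E1 \<union> (\<lambda>k. (k, 0)) ` K) (B @ replicate s [c])) w else 0)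
        = of_bool (card K = s - card E1 \<and> card E1 \<le> s) * ?V"
    proof (cases "card E1 + card K = s")
      case True
      then have "s - card K = card E1" by simp
      with Pn_delete_positions_append_letters[OF assms K, of w, where 'a = 'a]
      have "Pn (delete_positions (E1 \<union> (\<lambda>k. (k, 0)) ` K) (B @ replicate s [c])) w = ?V"
        by (simp add: field_simps)
      then show ?thesis using True by auto
    qed auto
  qed
  also have "\<dots> = of_nat (card (Pow {N..<N + s} \<inter> {K. card K = s - card E1 \<and> card E1 \<le> s})) * ?V"
  proof -
    have "finite (Pow {N..<N + s})" by simp
    then show ?thesis by (simp only: sum_distrib_right[symmetric] sum_of_bool_eq)
  qed
  also have "\<dots> = of_nat (s choose card E1) * ?V"
    by (simp only: card_subsets_card_diff)
  finally show ?thesis .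
qed

lemma delete_letter_Pn_append_letters:
  assumes "length B = N"
  shows "delete_letter c s (Pn (B @ replicate s [c])) w =
    (\<Sum>E\<in>Pow (occurrences c B). of_nat (s choose card E) * ((of_nat (fact (N + s)) :: 'a::field_char_0) *
           Pn (delete_positions E B @ replicate (card E) [c]) w / of_nat (fact (N + card E))))"
proof -
  let ?C = "B @ replicate s [c]"
  let ?A = "occurrences c B"
  let ?pos = "\<lambda>k. (k, 0::nat)"
  let ?F = "\<lambda>E. if card E = s then Pn (delete_positions E ?C) w else (0::'a)"
  have disj: "?A \<inter> ?pos ` {N..<N + s} = {}"
    using fst_occurrence_less[of _ c B] assms by fastforce
  have card_Un: "card (E \<union> ?pos ` K) = card E + card K" if "E \<subseteq> ?A" "K \<subseteq> {N..<N + s}" for E K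
  proof -
    have "finite E" using finite_subset[OF that(1) finite_occurrences] .
    moreover have "finite K" using that(2) by (rule finite_subset) simp
    moreover have "card (?pos ` K) = card K" by (rule card_image) (auto simp: inj_on_def)
    moreover have "E \<inter> ?pos ` K = {}" using disj that by blast
    ultimately show ?thesis by (simp add: card_Un_disjoint)
  qed
  have pos_Pow: "bij_betw (image ?pos) (Pow {N..<N + s}) (Pow (?pos ` {N..<N + s}))"
    by (rule bij_betw_image_Pow) (auto simp: bij_betw_def inj_on_def)
  have "{E. E \<subseteq> occurrences c ?C \<and> card E = s} = {E \<in> Pow (occurrences c ?C). card E = s}"
    by auto
  then have "delete_letter c s (Pn ?C) w = (\<Sum>E\<in>Pow (occurrences c ?C). ?F E)"
    unfolding delete_letter_Pn by (simp only: sum.inter_filter finite_occurrences finite_Pow_iff)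
  also have "\<dots> = (\<Sum>E\<in>Pow ?A. \<Sum>E'\<in>Pow (?pos ` {N..<N + s}). ?F (E \<union> E'))"
    unfolding occurrences_append_letters[OF assms] by (rule sum_Pow_Un[OF disj])
  also have "\<dots> = (\<Sum>E\<in>Pow ?A. \<Sum>K\<in>Pow {N..<N + s}. ?F (E \<union> ?pos ` K))"
    by (rule sum.cong[OF refl], rule sum.reindex_bij_betw[OF pos_Pow, symmetric])
  also have "\<dots> = (\<Sum>E\<in>Pow ?A. \<Sum>K\<in>Pow {N..<N + s}.
      if card E + card K = s then Pn (delete_positions (E \<union> ?pos ` K) ?C) w else 0)"
    by (intro sum.cong refl) (simp add: card_Un)
  also have "\<dots> = (\<Sum>E\<in>Pow ?A. of_nat (s choose card E) * (of_nat (fact (N + s)) *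
      Pn (delete_positions E B @ replicate (card E) [c]) w / of_nat (fact (N + card E))))"
    by (intro sum.cong refl sum_delete_appended_letters[OF assms]) simp
  finally show ?thesis .
qed

section \<open>Independence after appending copies of a letter\<close>

text \<open>\<open>G j s\<close> is \<open>\<delta>\<^sub>s\<close> of the \<open>j\<close>-th shifted combination, divided by \<open>(N + s)!\<close>.\<close>

lemma lin_indep_append_letters_eventually:
  fixes \<alpha> :: "nat \<Rightarrow> nat \<Rightarrow> 'a::field_char_0"
  assumes len: "\<And>i. i < l \<Longrightarrow> length (ms i) = N"
    and indep: "lin_indep r (\<lambda>j w. \<Sum>i<l. \<alpha> j i * Pn (ms i) w)"
  shows "\<forall>\<^sub>F s in sequentially. lin_indep r (\<lambda>j w. \<Sum>i<l. \<alpha> j i * Pn (ms i @ replicate s [c]) w)"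
proof -
  define F where "F s j w = (\<Sum>i<l. \<alpha> j i * Pn (ms i @ replicate s [c]) w)" for s j w
  define G where "G j s w = (\<Sum>i<l. \<alpha> j i * (\<Sum>E\<in>Pow (occurrences c (ms i)).
      of_nat (s choose card E) *
      (Pn (delete_positions E (ms i) @ replicate (card E) [c]) w / of_nat (fact (N + card E)))))"
    for j s w
  have delete_F: "delete_letter c s (F s j) w = of_nat (fact (N + s)) * G j s w" for s j w
  proof -
    have "delete_letter c s (F s j) w
        = (\<Sum>i<l. \<alpha> j i * delete_letter c s (Pn (ms i @ replicate s [c])) w)"
      unfolding F_def by (rule delete_letter_sum)
    also have "\<dots> = of_nat (fact (N + s)) * G j s w"
      unfolding G_def
      by (simp add: delete_letter_Pn_append_letters len sum_distrib_left algebra_simps)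
    finally show ?thesis .
  qed
  have delete_zero: "delete_letter c s (\<lambda>v. 0) w = 0" for s w
    by (simp add: delete_letter_def)
  have "polynomial_family (G j)" for j
    unfolding G_def
    by (intro polynomial_family_sum polynomial_family_mult polynomial_family_const
        polynomial_family_binomial)
  moreover have "lin_indep r (\<lambda>j. G j 0)"
  proof (rule lin_indep_of_linear_image[OF indep, where L = "\<lambda>h w. of_nat (fact N) * h w"])
    have F0: "(\<Sum>i<l. \<alpha> j i * Pn (ms i) w) = of_nat (fact N) * G j 0 w" for j w
      using delete_F[of 0 j w] by (simp add: delete_letter_0 F_def)
    show "of_nat (fact N) * (\<Sum>j<r. c' j * G j 0 w) = (\<Sum>j<r. c' j * (\<Sum>i<l. \<alpha> j i * Pn (ms i) w))"
      for c' w
      by (simp add: F0 sum_distrib_left algebra_simps)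
  qed simp
  ultimately have "\<forall>\<^sub>F s in sequentially. lin_indep r (\<lambda>j. G j s)"
    by (rule lin_indep_eventually_of_polynomial_family)
  then show ?thesis
  proof eventually_elim
    case (elim s)
    show ?case
    proof (rule lin_indep_of_linear_image[OF elim,
          where L = "\<lambda>h w. delete_letter c s h w / of_nat (fact (N + s))"])
      show "delete_letter c s (\<lambda>v. \<Sum>j<r. c' j * (\<Sum>i<l. \<alpha> j i * Pn (ms i @ replicate s [c]) v)) w
          / of_nat (fact (N + s)) = (\<Sum>j<r. c' j * G j s w)" for c' w
        using delete_letter_sum[of c s c' "\<lambda>j. F s j" "{..<r}" w]
        by (simp add: F_def delete_F sum_divide_distrib)
    qed (simp add: delete_zero)
  qed
qed

theorem lemma4p18:
  fixes K :: nat and \<mu> :: "nat list"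
  assumes "is_partition \<mu> (4 * K)"
  shows "\<exists>M \<ge> 3 * K. \<forall>N \<ge> M. \<forall>T Os (\<alpha> :: nat \<Rightarrow> nat \<Rightarrow> 'a::field_char_0) r.
     standard_tableau T (shape_shift (N - 3 * K) \<mu>) \<and>
     set Os \<subseteq> ordered_partitions N (N + K) \<and>
     lin_indep r (\<lambda>j w. \<Sum>i<length Os. \<alpha> j i * Pn (map (subw T) (Os ! i)) w)
     \<longrightarrow> (\<exists>s0. \<forall>s \<ge> s0. lin_indep r
            (\<lambda>j w. \<Sum>i<length Os. \<alpha> j i * Pn (map (subw T) (Os ! i) @ replicate s [1]) w))"
proof -
  have "\<exists>s0. \<forall>s \<ge> s0. lin_indep r
          (\<lambda>j w. \<Sum>i<length Os. \<alpha> j i * Pn (map (subw T) (Os ! i) @ replicate s [1]) w)"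
    if Os: "set Os \<subseteq> ordered_partitions N (N + K)"
      and indep: "lin_indep r (\<lambda>j w. \<Sum>i<length Os. \<alpha> j i * Pn (map (subw T) (Os ! i)) w)"
    for N T Os r and \<alpha> :: "nat \<Rightarrow> nat \<Rightarrow> 'a"
  proof -
    have "length (map (subw T) (Os ! i)) = N" if "i < length Os" for i
      using Os nth_mem[OF that] by (auto simp: ordered_partitions_def)
    from lin_indep_append_letters_eventually[OF this indep]
    show ?thesis unfolding eventually_sequentially .
  qed
  then show ?thesis by blast
qed

end
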